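(* Let $L$ be a post-Lie-Rinehart algebra over $R$, with anchor map $\rho$ and connection $\rhd$. Then $E\ell_R(L)$ is a subalgebra of the algebra (under composition) generated by $\{\delta X,\tilde{\delta}X : X\in L\}$.
   Context: Let $R$ be a commutative unital algebra. A Lie-Rinehart algebra over $R$ is an $R$-module $L$ with a Lie bracket $\llbracket\cdot,\cdot\rrbracket$ and an $R$-linear Lie algebra morphism $\rho:L\to\mathrm{Der}(R)$ (the anchor) such that $\llbracket X,fY\rrbracket=(\rho(X)f)Y+f\llbracket X,Y\rrbracket$ for $f\in R$ and $X,Y\in L$. A connection is a map $L\times L\to L$, $(X,Y)\mapsto X\rhd Y$, that is $R$-linear in $X$ and satisfies $X\rhd(fY)=(\rho(X)f)Y+f\,X\rhd Y$. Its torsion is $T(X,Y)=X\rhd Y-Y\rhd X-\llbracket X,Y\rrbracket$ and its curvature is $\mathcal{R}(X,Y,Z)=X\rhd(Y\rhd Z)-Y\rhd(X\rhd Z)-\llbracket X,Y\rrbracket\rhd Z$. A post-Lie-Rinehart algebra is a Lie-Rinehart algebra with a connection that is flat ($\mathcal{R}=0$) and has constant torsion ($X\rhd T(Y,Z)=T(X\rhd Y,Z)+T(Y,X\rhd Z)$). Put $[X,Y]:=-T(X,Y)$; then $(L,[\cdot,\cdot],\rhd)$ is a post-Lie algebra. The connection extends to $\mathrm{Hom}_R(L)$ by $(X\rhd u)(Y)=X\rhd u(Y)-u(X\rhd Y)$. For $X\in L$ define $\delta X\in\mathrm{Hom}_R(L)$ by $\delta X(Z)=Z\rhd X$, and $\tilde\delta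 X$ by $\tilde\delta X(Z)=Z\rhd X+[Z,X]$. $E\ell_R(L)$, the algebra of elementary $R$-module endomorphisms, is the $R$-module subalgebra of $\mathrm{Hom}_R(L)$ (with composition as product) generated by the elements $Y_1\rhd(Y_2\rhd(\cdots(Y_n\rhd\delta X)\cdots))$ with $n\ge 0$ and $X,Y_1,\dots,Y_n\in L$. *)

theory Defs
  imports Main
begin

text \<open>The Lie bracket is br, the anchor is rho (rho X is a map R -> R), the
connection is cn (cn X Y stands for X |> Y).\<close>

definition is_module :: "('r::comm_ring_1 \<Rightarrow> 'l::ab_group_add \<Rightarrow> 'l) \<Rightarrow> bool" where
  "is_module sm \<longleftrightarrow>
     (\<forall>a b x. sm (a + b) x = sm a x + sm b x) \<and>
     (\<forall>a x y. sm a (x + y) = sm a x + sm a y) \<and>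
     (\<forall>a b x. sm (a * b) x = sm a (sm b x)) \<and>
     (\<forall>x. sm 1 x = x)"

definition is_derivation :: "('r::comm_ring_1 \<Rightarrow> 'r) \<Rightarrow> bool" where
  "is_derivation D \<longleftrightarrow>
     (\<forall>f g. D (f + g) = D f + D g) \<and> (\<forall>f g. D (f * g) = D f * g + f * D g)"

definition lie_rinehart ::
  "('r::comm_ring_1 \<Rightarrow> 'l::ab_group_add \<Rightarrow> 'l) \<Rightarrow> ('l \<Rightarrow> 'l \<Rightarrow> 'l) \<Rightarrow> ('l \<Rightarrow> 'r \<Rightarrow> 'r) \<Rightarrow> bool" where
  "lie_rinehart sm br rho \<longleftrightarrow>
     is_module sm \<and>
     \<comment> \<open>Lie algebra: biadditive, alternating, Jacobi\<close>
     (\<forall>x y z. br (x + y) z = br x z + br y z) \<and>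
     (\<forall>x y z. br x (y + z) = br x y + br x z) \<and>
     (\<forall>x. br x x = 0) \<and>
     (\<forall>x y z. br x (br y z) + br y (br z x) + br z (br x y) = 0) \<and>
     \<comment> \<open>anchor: R-linear map into derivations, Lie algebra morphism\<close>
     (\<forall>x. is_derivation (rho x)) \<and>
     (\<forall>x y f. rho (x + y) f = rho x f + rho y f) \<and>
     (\<forall>g x f. rho (sm g x) f = g * rho x f) \<and>
     (\<forall>x y f. rho (br x y) f = rho x (rho y f) - rho y (rho x f)) \<and>
     \<comment> \<open>Leibniz rule\<close>
     (\<forall>x f y. br x (sm f y) = sm (rho x f) y + sm f (br x y))"

definition is_connection ::
  "('r::comm_ring_1 \<Rightarrow> 'l::ab_group_add \<Rightarrow> 'l) \<Rightarrow> ('l \<Rightarrow> 'r \<Rightarrow> 'r) \<Rightarrow> ('l \<Rightarrow> 'l \<Rightarrow> 'l) \<Rightarrow> bool" where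
  "is_connection sm rho cn \<longleftrightarrow>
     (\<forall>x y z. cn (x + y) z = cn x z + cn y z) \<and>
     (\<forall>f x z. cn (sm f x) z = sm f (cn x z)) \<and>
     (\<forall>x y z. cn x (y + z) = cn x y + cn x z) \<and>
     (\<forall>x f y. cn x (sm f y) = sm (rho x f) y + sm f (cn x y))"

definition torsion :: "('l::ab_group_add \<Rightarrow> 'l \<Rightarrow> 'l) \<Rightarrow> ('l \<Rightarrow> 'l \<Rightarrow> 'l) \<Rightarrow> 'l \<Rightarrow> 'l \<Rightarrow> 'l" where
  "torsion br cn x y = cn x y - cn y x - br x y"

definition curvature :: "('l::ab_group_add \<Rightarrow> 'l \<Rightarrow> 'l) \<Rightarrow> ('l \<Rightarrow> 'l \<Rightarrow> 'l) \<Rightarrow> 'l \<Rightarrow> 'l \<Rightarrow> 'l \<Rightarrow> 'l" where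
  "curvature br cn x y z = cn x (cn y z) - cn y (cn x z) - cn (br x y) z"

definition post_lie_rinehart ::
  "('r::comm_ring_1 \<Rightarrow> 'l::ab_group_add \<Rightarrow> 'l) \<Rightarrow> ('l \<Rightarrow> 'l \<Rightarrow> 'l) \<Rightarrow> ('l \<Rightarrow> 'r \<Rightarrow> 'r)
     \<Rightarrow> ('l \<Rightarrow> 'l \<Rightarrow> 'l) \<Rightarrow> bool" where
  "post_lie_rinehart sm br rho cn \<longleftrightarrow>
     lie_rinehart sm br rho \<and> is_connection sm rho cn \<and>
     (\<forall>x y z. curvature br cn x y z = 0) \<and>
     (\<forall>x y z. cn x (torsion br cn y z) = torsion br cn (cn x y) z + torsion br cn y (cn x z))"

definition plbr :: "('l::ab_group_add \<Rightarrow> 'l \<Rightarrow> 'l) \<Rightarrow> ('l \<Rightarrow> 'l \<Rightarrow> 'l) \<Rightarrow> 'l \<Rightarrow> 'l \<Rightarrow> 'l" where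
  "plbr br cn x y = - torsion br cn x y"

definition conn_hom :: "('l::ab_group_add \<Rightarrow> 'l \<Rightarrow> 'l) \<Rightarrow> 'l \<Rightarrow> ('l \<Rightarrow> 'l) \<Rightarrow> ('l \<Rightarrow> 'l)" where
  "conn_hom cn x u = (\<lambda>y. cn x (u y) - u (cn x y))"

definition delta :: "('l \<Rightarrow> 'l \<Rightarrow> 'l) \<Rightarrow> 'l \<Rightarrow> ('l \<Rightarrow> 'l)" where
  "delta cn x = (\<lambda>z. cn z x)"

definition tdelta :: "('l::ab_group_add \<Rightarrow> 'l \<Rightarrow> 'l) \<Rightarrow> ('l \<Rightarrow> 'l \<Rightarrow> 'l) \<Rightarrow> 'l \<Rightarrow> ('l \<Rightarrow> 'l)" where
  "tdelta br cn x = (\<lambda>z. cn z x + plbr br cn z x)"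

inductive_set ralg_gen :: "('r \<Rightarrow> 'l::ab_group_add \<Rightarrow> 'l) \<Rightarrow> ('l \<Rightarrow> 'l) set \<Rightarrow> ('l \<Rightarrow> 'l) set"
  for sm :: "'r \<Rightarrow> 'l \<Rightarrow> 'l" and G :: "('l \<Rightarrow> 'l) set" where
  gen: "u \<in> G \<Longrightarrow> u \<in> ralg_gen sm G"
| zero: "(\<lambda>_. 0) \<in> ralg_gen sm G"
| add: "u \<in> ralg_gen sm G \<Longrightarrow> v \<in> ralg_gen sm G \<Longrightarrow> (\<lambda>y. u y + v y) \<in> ralg_gen sm G"
| scal: "u \<in> ralg_gen sm G \<Longrightarrow> (\<lambda>y. sm f (u y)) \<in> ralg_gen sm G"
| comp: "u \<in> ralg_gen sm G \<Longrightarrow> v \<in> ralg_gen sm G \<Longrightarrow> u \<circ> v \<in> ralg_gen sm G"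

inductive_set el_gens :: "('l::ab_group_add \<Rightarrow> 'l \<Rightarrow> 'l) \<Rightarrow> ('l \<Rightarrow> 'l) set"
  for cn :: "'l \<Rightarrow> 'l \<Rightarrow> 'l" where
  base: "delta cn x \<in> el_gens cn"
| step: "u \<in> el_gens cn \<Longrightarrow> conn_hom cn y u \<in> el_gens cn"

definition El :: "('r \<Rightarrow> 'l::ab_group_add \<Rightarrow> 'l) \<Rightarrow> ('l \<Rightarrow> 'l \<Rightarrow> 'l) \<Rightarrow> ('l \<Rightarrow> 'l) set" where
  "El sm cn = ralg_gen sm (el_gens cn)"

end

theory Submission
  imports Defs "HOL.Modules"
begin

text \<open>The extension \<open>Y \<rhd> -\<close> of the connection to endomorphisms obeys a Leibniz rule for
composition of additive maps and for R-scaling, so it preserves every algebra of additive maps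
whose generators it maps into that algebra. Flatness and constant torsion give, with
\<open>tdelta Y Z = Y \<rhd> Z - \<lbrakk>Y,Z\<rbrakk>\<close>,
  \<open>Y \<rhd> delta X = delta (Y \<rhd> X) - delta X \<circ> tdelta Y\<close> and
  \<open>Y \<rhd> tdelta X = tdelta (Y \<rhd> X) - delta X \<circ> tdelta Y\<close>.
Hence the algebra generated by all \<open>delta X\<close> and \<open>tdelta X\<close> is stable under every \<open>Y \<rhd> -\<close>;
it thus contains the generators of \<open>E\<ell>\<^sub>R(L)\<close>, and so all of \<open>E\<ell>\<^sub>R(L)\<close>.\<close>

lemma module_if_is_module: "is_module sm \<Longrightarrow> module sm"
  unfolding is_module_def by unfold_locales auto

lemma ralg_gen_subset:
  assumes "G \<subseteq> ralg_gen sm H"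
  shows "ralg_gen sm G \<subseteq> ralg_gen sm H"
proof
  fix u assume "u \<in> ralg_gen sm G"
  then show "u \<in> ralg_gen sm H"
    by induction (use assms in \<open>blast intro: ralg_gen.intros\<close>)+
qed

context module
begin

lemma ralg_gen_diff:
  assumes "u \<in> ralg_gen scale G" "v \<in> ralg_gen scale G"
  shows "(\<lambda>y. u y - v y) \<in> ralg_gen scale G"
proof -
  have "(\<lambda>y. - 1 *s v y) \<in> ralg_gen scale G"
    using assms(2) by (rule ralg_gen.scal)
  with assms(1) have "(\<lambda>y. u y + - 1 *s v y) \<in> ralg_gen scale G"
    by (rule ralg_gen.add)
  then show ?thesis by simp
qed

lemma ralg_gen_additive:
  assumes "\<And>g. g \<in> G \<Longrightarrow> additive g" and "u \<in> ralg_gen scale G"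
  shows "additive u"
  using assms(2)
proof induction
  case (gen u)
  then show ?case by (rule assms(1))
next
  case zero
  then show ?case by (simp add: additive_def)
next
  case (add u v)
  then show ?case by (simp add: additive_def algebra_simps)
next
  case (scal u f)
  then show ?case by (simp add: additive_def scale_right_distrib)
next
  case (comp u v)
  then show ?case by (simp add: additive_def)
qed

end

lemma conn_hom_add:
  assumes "additive (cn y)"
  shows "conn_hom cn y (\<lambda>z. u z + v z) = (\<lambda>z. conn_hom cn y u z + conn_hom cn y v z)"
  using additive.add[OF assms] by (simp add: conn_hom_def fun_eq_iff algebra_simps)

lemma conn_hom_comp:
  assumes "additive u"
  shows "conn_hom cn y (u \<circ> v) = (\<lambda>z. (conn_hom cn y u \<circ> v) z + (u \<circ> conn_hom cn y v) z)"
  using additive.diff[OF assms] by (simp add: conn_hom_def fun_eq_iff)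

lemma conn_hom_scale:
  assumes "is_connection sm rho cn" and "module sm"
  shows "conn_hom cn y (\<lambda>z. sm f (u z)) = (\<lambda>z. sm (rho y f) (u z) + sm f (conn_hom cn y u z))"
  using assms module.scale_right_diff_distrib[OF assms(2)]
  by (simp add: is_connection_def conn_hom_def fun_eq_iff)

lemma additive_connection: "is_connection sm rho cn \<Longrightarrow> additive (cn y)"
  by (simp add: is_connection_def additive_def)

lemma conn_hom_ralg_gen:
  assumes "is_connection sm rho cn" and "module sm"
    and additive: "\<And>g. g \<in> G \<Longrightarrow> additive g"
    and stable: "\<And>g. g \<in> G \<Longrightarrow> conn_hom cn y g \<in> ralg_gen sm G"
    and "u \<in> ralg_gen sm G"
  shows "conn_hom cn y u \<in> ralg_gen sm G"
proof -
  have cn_additive: "additive (cn y)"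
    using assms(1) by (rule additive_connection)
  show ?thesis
    using assms(5)
  proof induction
    case (gen u)
    then show ?case by (rule stable)
  next
    case zero
    have "conn_hom cn y (\<lambda>_. 0) = (\<lambda>_. 0)"
      by (simp add: conn_hom_def additive.zero[OF cn_additive])
    then show ?case by (simp add: ralg_gen.zero)
  next
    case (add u v)
    then show ?case by (simp add: conn_hom_add[of cn y, OF cn_additive] ralg_gen.add)
  next
    case (scal u f)
    then show ?case
      by (simp add: conn_hom_scale[OF assms(1,2)] ralg_gen.add ralg_gen.scal)
  next
    case (comp u v)
    have "additive u"
      using module.ralg_gen_additive[OF assms(2) additive comp.hyps(1)] .
    then show ?case
      unfolding conn_hom_comp[OF \<open>additive u\<close>]
      by (intro ralg_gen.add ralg_gen.comp) (use comp in auto)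
  qed
qed

lemma el_gens_subset:
  assumes "\<And>x. delta cn x \<in> A" and "\<And>y u. u \<in> A \<Longrightarrow> conn_hom cn y u \<in> A"
  shows "el_gens cn \<subseteq> A"
proof
  fix u assume "u \<in> el_gens cn"
  then show "u \<in> A" by induction (use assms in auto)
qed

context
  fixes sm :: "'r::comm_ring_1 \<Rightarrow> 'l::ab_group_add \<Rightarrow> 'l"
    and br :: "'l \<Rightarrow> 'l \<Rightarrow> 'l" and rho :: "'l \<Rightarrow> 'r \<Rightarrow> 'r" and cn :: "'l \<Rightarrow> 'l \<Rightarrow> 'l"
  assumes post_lie: "post_lie_rinehart sm br rho cn"
begin

lemma lie_rinehart_if_post_lie: "lie_rinehart sm br rho"
  using post_lie by (simp add: post_lie_rinehart_def)

lemma is_connection_if_post_lie: "is_connection sm rho cn"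
  using post_lie by (simp add: post_lie_rinehart_def)

lemma module_if_post_lie: "module sm"
  using lie_rinehart_if_post_lie by (simp add: lie_rinehart_def module_if_is_module)

lemma additive_cn_left: "additive (\<lambda>x. cn x z)"
  using is_connection_if_post_lie by (simp add: is_connection_def additive_def)

lemma additive_cn_right: "additive (cn x)"
  using is_connection_if_post_lie by (rule additive_connection)

lemma additive_br_left: "additive (\<lambda>x. br x z)"
  using lie_rinehart_if_post_lie by (simp add: lie_rinehart_def additive_def)

lemma additive_br_right: "additive (br x)"
  using lie_rinehart_if_post_lie by (simp add: lie_rinehart_def additive_def)

lemma br_anticomm: "br y x = - br x y"
proof -
  have "0 = br (x + y) (x + y)"
    using lie_rinehart_if_post_lie by (simp add: lie_rinehart_def)
  also have "\<dots> = br x x + br y x + (br x y + br y y)"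
    by (simp add: additive.add[OF additive_br_left] additive.add[OF additive_br_right])
  also have "\<dots> = br x y + br y x"
    using lie_rinehart_if_post_lie by (simp add: lie_rinehart_def)
  finally show ?thesis by (simp add: eq_neg_iff_add_eq_0 add.commute)
qed

lemma cn_br: "cn (br x y) z = cn x (cn y z) - cn y (cn x z)"
  using post_lie by (simp add: post_lie_rinehart_def curvature_def)

lemma cn_plbr: "cn x (plbr br cn y z) = plbr br cn (cn x y) z + plbr br cn y (cn x z)"
  using post_lie additive.minus[OF additive_cn_right]
  by (simp add: post_lie_rinehart_def plbr_def add.commute)

lemma tdelta_eq: "tdelta br cn y z = cn y z - br y z"
  by (simp add: tdelta_def plbr_def torsion_def br_anticomm[of y z])

lemma additive_delta: "additive (delta cn x)"
  unfolding delta_def by (rule additive_cn_left)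

lemma additive_tdelta: "additive (tdelta br cn x)"
  using additive.add[OF additive_cn_right] additive.add[OF additive_br_right]
  by (simp add: additive_def tdelta_eq)

lemma conn_hom_delta:
  "conn_hom cn y (delta cn x) = (\<lambda>z. delta cn (cn y x) z - (delta cn x \<circ> tdelta br cn y) z)"
proof
  fix z
  have "cn (tdelta br cn y z) x = cn (cn y z) x - cn y (cn z x) + cn z (cn y x)"
    by (simp add: tdelta_eq additive.diff[OF additive_cn_left] cn_br)
  then show "conn_hom cn y (delta cn x) z = delta cn (cn y x) z - (delta cn x \<circ> tdelta br cn y) z"
    by (simp add: conn_hom_def delta_def)
qed

lemma conn_hom_tdelta:
  "conn_hom cn y (tdelta br cn x) = (\<lambda>z. tdelta br cn (cn y x) z - (delta cn x \<circ> tdelta br cn y) z)"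
proof -
  have tdelta_split: "tdelta br cn x = (\<lambda>z. delta cn x z + plbr br cn z x)"
    by (simp add: tdelta_def delta_def)
  have torsion_part: "conn_hom cn y (\<lambda>z. plbr br cn z x) = (\<lambda>z. plbr br cn z (cn y x))"
    by (simp add: conn_hom_def cn_plbr)
  have "conn_hom cn y (tdelta br cn x) = (\<lambda>z. conn_hom cn y (delta cn x) z + plbr br cn z (cn y x))"
    unfolding tdelta_split conn_hom_add[OF additive_cn_right] torsion_part ..
  also have "\<dots> = (\<lambda>z. tdelta br cn (cn y x) z - (delta cn x \<circ> tdelta br cn y) z)"
    unfolding conn_hom_delta by (simp add: tdelta_def delta_def algebra_simps)
  finally show ?thesis .
qed

lemma conn_hom_generator_in_ralg_gen:
  assumes "g \<in> range (delta cn) \<union> range (tdelta br cn)"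
  shows "conn_hom cn y g \<in> ralg_gen sm (range (delta cn) \<union> range (tdelta br cn))"
proof -
  interpret module sm by (rule module_if_post_lie)
  from assms consider x where "g = delta cn x" | x where "g = tdelta br cn x"
    by blast
  then show ?thesis
    by cases
      (simp_all only: conn_hom_delta conn_hom_tdelta,
        (intro ralg_gen_diff ralg_gen.comp ralg_gen.gen; simp)+)
qed

end

theorem mainTheorem5:
  fixes sm :: "'r::comm_ring_1 \<Rightarrow> 'l::ab_group_add \<Rightarrow> 'l"
    and br :: "'l \<Rightarrow> 'l \<Rightarrow> 'l" and rho :: "'l \<Rightarrow> 'r \<Rightarrow> 'r" and cn :: "'l \<Rightarrow> 'l \<Rightarrow> 'l"
  assumes "post_lie_rinehart sm br rho cn"
  shows "El sm cn \<subseteq> ralg_gen sm (range (delta cn) \<union> range (tdelta br cn))"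
proof -
  let ?G = "range (delta cn) \<union> range (tdelta br cn)"
  have "el_gens cn \<subseteq> ralg_gen sm ?G"
  proof (rule el_gens_subset)
    show "delta cn x \<in> ralg_gen sm ?G" for x
      by (simp add: ralg_gen.gen)
    show "conn_hom cn y u \<in> ralg_gen sm ?G" if "u \<in> ralg_gen sm ?G" for y u
      using is_connection_if_post_lie[OF assms] module_if_post_lie[OF assms] _ _ that
    proof (rule conn_hom_ralg_gen)
      show "additive g" if "g \<in> ?G" for g
        using that additive_delta[OF assms] additive_tdelta[OF assms] by blast
    qed (rule conn_hom_generator_in_ralg_gen[OF assms])
  qed
  then show ?thesis
    unfolding El_def by (rule ralg_gen_subset)
qed

end
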